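(* Let $\bm w$ be a lazy Markov stick-breaking weights sequence with parameters $(\rho,\bm\pi)$, where $\pi_j=\mathrm{Beta}(1-\sigma,\theta+j\sigma)$ with $0\le\sigma<1$ and $\theta>-\sigma$. Then for every $j\ge1$, $$\mathbb P[w_{j+1}\le w_j]=\rho+(1-\rho)\,\mathbb E\big[\mathcal I_{c(v)}(1-\sigma,\theta+(j+1)\sigma)\big],$$ where $v\sim\mathrm{Beta}(1-\sigma,\theta+j\sigma)$, $c(v)=\min\{1,v/(1-v)\}$, and $\mathcal I_x(a,b)$ is the regularized incomplete Beta function.
   Context: $\mathcal I_x(a,b)$ is the $\mathrm{Beta}(a,b)$ distribution function at $x$. With $F_j$ the distribution function of $\pi_j$ and $\Upsilon_j=F_{j+1}^{-1}\circ F_j$, a lazy Markov stick-breaking weights sequence with parameters $(\rho,\bm\pi)$, $\rho\in[0,1]$, is $w_1=v_1$, $w_j=v_j\prod_{i<j}(1-v_i)$ where $\bm v$ is a Markov chain with $v_1\sim\pi_1$ and $\mathbb P[v_{j+1}\in\cdot\mid v_j]=\rho\,\delta_{\Upsilon_j(v_j)}+(1-\rho)\pi_{j+1}$. *)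

theory Defs
  imports "HOL-Probability.Probability"
begin

definition beta_density :: "real \<Rightarrow> real \<Rightarrow> real \<Rightarrow> real" where
  "beta_density a b x =
     (if 0 < x \<and> x < 1 then x powr (a - 1) * (1 - x) powr (b - 1) / Beta a b else 0)"

definition beta_measure :: "real \<Rightarrow> real \<Rightarrow> real measure" where
  "beta_measure a b = density lborel (\<lambda>x. ennreal (beta_density a b x))"

definition incbeta :: "real \<Rightarrow> real \<Rightarrow> real \<Rightarrow> real" where
  "incbeta a b x = measure (beta_measure a b) {..x}"

definition cdf_of :: "real measure \<Rightarrow> real \<Rightarrow> real" where
  "cdf_of \<mu> x = measure \<mu> {..x}"

definition quantile_of :: "real measure \<Rightarrow> real \<Rightarrow> real" where
  "quantile_of \<mu> p = Inf {x \<in> {0..1}. p \<le> cdf_of \<mu> x}"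

definition Upsilon :: "(nat \<Rightarrow> real measure) \<Rightarrow> nat \<Rightarrow> real \<Rightarrow> real" where
  "Upsilon \<pi> j x = quantile_of (\<pi> (Suc j)) (cdf_of (\<pi> j) x)"

definition lazy_kernel :: "real \<Rightarrow> (nat \<Rightarrow> real measure) \<Rightarrow> nat \<Rightarrow> real \<Rightarrow> real set \<Rightarrow> real" where
  "lazy_kernel \<rho> \<pi> j x A =
     \<rho> * indicator A (Upsilon \<pi> j x) + (1 - \<rho>) * measure (\<pi> (Suc j)) A"

text \<open>v_1, v_2, ... (indices from 1) is a Markov chain on the probability space M with
  v_1 ~ pi_1 and P[v_{j+1} \<in> A | v_1, ..., v_j] = lazy_kernel rho pi j (v_j) A.\<close>
definition lazy_markov_chain ::
  "'a measure \<Rightarrow> real \<Rightarrow> (nat \<Rightarrow> real measure) \<Rightarrow> (nat \<Rightarrow> 'a \<Rightarrow> real) \<Rightarrow> bool" where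
  "lazy_markov_chain M \<rho> \<pi> v \<longleftrightarrow>
     prob_space M \<and>
     (\<forall>j\<ge>1. v j \<in> borel_measurable M) \<and>
     distr M borel (v 1) = \<pi> 1 \<and>
     (\<forall>j\<ge>1. \<forall>A \<in> sets borel. \<forall>B \<in> sets (PiM {1..j} (\<lambda>_. (borel :: real measure))).
        measure M {\<omega> \<in> space M. (\<lambda>i\<in>{1..j}. v i \<omega>) \<in> B \<and> v (Suc j) \<omega> \<in> A} =
        (\<integral>\<omega>. indicator B (\<lambda>i\<in>{1..j}. v i \<omega>) * lazy_kernel \<rho> \<pi> j (v j \<omega>) A \<partial>M))"

definition sb_weight :: "(nat \<Rightarrow> 'a \<Rightarrow> real) \<Rightarrow> nat \<Rightarrow> 'a \<Rightarrow> real" where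
  "sb_weight v j \<omega> = v j \<omega> * (\<Prod>i\<in>{1..<j}. (1 - v i \<omega>))"

end

theory Submission
  imports Defs
begin

(* With probability rho the chain moves deterministically, v_{j+1} = Upsilon_j(v_j); otherwise
  v_{j+1} is drawn from pi_{j+1} independently of the past.  Almost surely all v_i lie in (0,1),
  and there w_{j+1} <= w_j means v_{j+1} <= c(v_j), where c(v) = min 1 (v/(1-v)) >= v.
  The laws Beta(1-sigma, theta+j*sigma) decrease stochastically in j (their density ratio is a
  multiple of (1-t)^sigma), so Upsilon_j(x) <= x and the deterministic move always satisfies the
  inequality.  The independent move satisfies it with probability E[F_{j+1}(c(v_j))], and v_j has
  law pi_j because Upsilon_j pushes pi_j forward to pi_{j+1}.  The joint law of (v_j, v_{j+1}) is
  determined from its values on rectangles by a Dynkin argument. *)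

section \<open>Stochastic order from a decreasing density ratio\<close>

lemma cdf_le_cdf_density_antimono:
  fixes r :: "real \<Rightarrow> real"
  assumes \<mu>: "real_distribution \<mu>" and \<nu>: "real_distribution (density \<mu> r)"
    and r: "r \<in> borel_measurable borel" "antimono r" "\<And>t. 0 \<le> r t"
  shows "cdf \<mu> x \<le> cdf (density \<mu> r) x"
proof -
  \<comment> \<open>The density r is at least r x left of x and at most r x right of x; depending on whether
    r x \<le> 1, one of the two resulting bounds gives the claim.\<close>
  interpret \<mu>: real_distribution \<mu> by (fact \<mu>)
  interpret \<nu>: real_distribution "density \<mu> r" by (fact \<nu>)
  have r_meas: "r \<in> borel_measurable \<mu>" using r(1) by simp
  have "ennreal (r x) * emeasure \<mu> {..x} = (\<integral>\<^sup>+t. ennreal (r x) * indicator {..x} t \<partial>\<mu>)"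
    by (simp add: nn_integral_cmult_indicator)
  also have "\<dots> \<le> (\<integral>\<^sup>+t. ennreal (r t) * indicator {..x} t \<partial>\<mu>)"
    using r(2) by (intro nn_integral_mono) (auto simp: antimono_def ennreal_leI split: split_indicator)
  also have "\<dots> = emeasure (density \<mu> r) {..x}"
    using r_meas by (simp add: emeasure_density)
  finally have below: "r x * cdf \<mu> x \<le> cdf (density \<mu> r) x"
    using r(3) by (simp add: cdf_def \<mu>.emeasure_eq_measure \<nu>.emeasure_eq_measure ennreal_mult[symmetric])
  have "emeasure (density \<mu> r) {x<..} = (\<integral>\<^sup>+t. ennreal (r t) * indicator {x<..} t \<partial>\<mu>)"
    using r_meas by (simp add: emeasure_density)
  also have "\<dots> \<le> (\<integral>\<^sup>+t. ennreal (r x) * indicator {x<..} t \<partial>\<mu>)"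
    using r(2,3) by (intro nn_integral_mono) (auto simp: antimono_def ennreal_leI split: split_indicator)
  also have "\<dots> = ennreal (r x) * emeasure \<mu> {x<..}"
    by (simp add: nn_integral_cmult_indicator)
  finally have "measure (density \<mu> r) {x<..} \<le> r x * measure \<mu> {x<..}"
    using r(3) by (simp add: \<mu>.emeasure_eq_measure \<nu>.emeasure_eq_measure ennreal_mult[symmetric])
  moreover have "measure \<mu> {x<..} = 1 - cdf \<mu> x" "measure (density \<mu> r) {x<..} = 1 - cdf (density \<mu> r) x"
    using \<mu>.prob_compl[of "{..x}"] \<nu>.prob_compl[of "{..x}"]
    by (simp_all add: cdf_def Compl_eq_Diff_UNIV[symmetric])
  ultimately have above: "1 - cdf (density \<mu> r) x \<le> r x * (1 - cdf \<mu> x)" by simp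
  show ?thesis
  proof (cases "r x \<le> 1")
    case True
    then have "r x * (1 - cdf \<mu> x) \<le> 1 - cdf \<mu> x"
      using \<mu>.cdf_bounded_prob by (simp add: mult_left_le_one_le r(3))
    with above show ?thesis by linarith
  next
    case False
    then have "cdf \<mu> x \<le> r x * cdf \<mu> x"
      using \<mu>.cdf_nonneg[of x] by (simp add: mult_le_cancel_right1)
    with below show ?thesis by linarith
  qed
qed

section \<open>The Beta distribution\<close>

lemma Beta_real_pos: "a > 0 \<Longrightarrow> b > 0 \<Longrightarrow> Beta a b > (0::real)"
  by (simp add: Beta_def Gamma_real_pos)

lemma borel_measurable_beta_density [measurable]: "beta_density a b \<in> borel_measurable borel"
  unfolding beta_density_def by measurable

lemma sets_beta_measure [simp, measurable_cong]: "sets (beta_measure a b) = sets borel"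
  by (simp add: beta_measure_def)

lemma space_beta_measure [simp]: "space (beta_measure a b) = UNIV"
  by (simp add: beta_measure_def)

lemma emeasure_beta_measure:
  "A \<in> sets borel \<Longrightarrow> emeasure (beta_measure a b) A = (\<integral>\<^sup>+x\<in>A. ennreal (beta_density a b x) \<partial>lborel)"
  unfolding beta_measure_def by (simp add: emeasure_density)

lemma emeasure_beta_measure_outside_unit:
  assumes "A \<in> sets borel" "A \<inter> {0<..<1} = {}"
  shows "emeasure (beta_measure a b) A = 0"
proof -
  have "ennreal (beta_density a b x) * indicator A x = 0" for x
    using assms(2) by (auto simp: beta_density_def split: split_indicator)
  then show ?thesis by (simp add: emeasure_beta_measure assms(1) del: mult_eq_0_iff)
qed

lemma measure_beta_measure_outside_unit:
  "A \<in> sets borel \<Longrightarrow> A \<inter> {0<..<1} = {} \<Longrightarrow> measure (beta_measure a b) A = 0"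
  by (simp add: measure_def emeasure_beta_measure_outside_unit)

lemma emeasure_beta_measure_singleton: "emeasure (beta_measure a b) {x} = 0"
  by (simp add: emeasure_beta_measure)

lemma real_distribution_beta_measure:
  assumes "a > 0" "b > 0"
  shows "real_distribution (beta_measure a b)"
proof -
  have B: "Beta a b > 0" using Beta_real_pos assms by simp
  have "((\<lambda>x. x powr (a - 1) * (1 - x) powr (b - 1) / Beta a b) has_integral 1) {0<..<1}"
    using has_integral_divide[OF has_integral_Beta_real[OF assms], of "Beta a b"] B
    by (simp add: has_integral_Icc_iff_Ioo)
  then have "(\<integral>\<^sup>+x\<in>{0<..<1}. ennreal (x powr (a - 1) * (1 - x) powr (b - 1) / Beta a b) \<partial>lborel) = 1"
    using B by (subst nn_integral_has_integral_lebesgue') auto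
  moreover have "emeasure (beta_measure a b) UNIV =
      (\<integral>\<^sup>+x\<in>{0<..<1}. ennreal (x powr (a - 1) * (1 - x) powr (b - 1) / Beta a b) \<partial>lborel)"
    by (auto simp: emeasure_beta_measure beta_density_def split: split_indicator intro!: nn_integral_cong)
  ultimately have "emeasure (beta_measure a b) UNIV = 1" by simp
  then show ?thesis
    by (auto simp: real_distribution_def real_distribution_axioms_def intro!: prob_spaceI)
qed

context
  fixes a b :: real
  assumes a: "a > 0" and b: "b > 0"
begin

interpretation real_distribution "beta_measure a b"
  using real_distribution_beta_measure[OF a b] .

lemma measure_beta_measure_unit: "measure (beta_measure a b) {0<..<1} = 1"
proof -
  have "measure (beta_measure a b) (UNIV - {0<..<1}) = 0"
    by (rule measure_beta_measure_outside_unit) auto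
  then show ?thesis using prob_compl[of "{0<..<1}"] by simp
qed

lemma isCont_cdf_beta_measure: "isCont (cdf (beta_measure a b)) x"
  by (simp add: isCont_cdf measure_def emeasure_beta_measure_singleton)

lemma cdf_beta_measure_0: "cdf (beta_measure a b) 0 = 0"
  unfolding cdf_def by (rule measure_beta_measure_outside_unit) auto

lemma cdf_beta_measure_1: "cdf (beta_measure a b) 1 = 1"
proof -
  have "measure (beta_measure a b) (UNIV - {..1}) = 0"
    by (rule measure_beta_measure_outside_unit) auto
  then show ?thesis using prob_compl[of "{..1}"] by (simp add: cdf_def)
qed

end

text \<open>Writing min t 1 instead of t makes the density ratio antitone on all of the real line
  (it vanishes from 1 on, where both densities vanish).\<close>

lemma beta_measure_eq_density_beta_measure:
  assumes a: "a > 0" and b: "0 < b" "b \<le> b'"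
  shows "beta_measure a b' =
    density (beta_measure a b) (\<lambda>t. Beta a b / Beta a b' * (1 - min t 1) powr (b' - b))"
proof -
  define r where "r t = Beta a b / Beta a b' * (1 - min t 1) powr (b' - b)" for t
  have B: "Beta a b > 0" "Beta a b' > 0" using Beta_real_pos a b by auto
  have "beta_density a b' t = beta_density a b t * r t" for t
  proof (cases "0 < t \<and> t < 1")
    case True
    then have "(1 - t) powr (b - 1) * (1 - t) powr (b' - b) = (1 - t) powr (b' - 1)"
      by (simp add: powr_add[symmetric])
    with True B show ?thesis
      by (simp add: beta_density_def r_def field_simps)
  qed (auto simp: beta_density_def)
  moreover have "0 \<le> r t" for t using B by (simp add: r_def)
  moreover have "0 \<le> beta_density a b t" for t using B by (simp add: beta_density_def)
  ultimately have "ennreal (beta_density a b' t) = ennreal (beta_density a b t) * ennreal (r t)" for t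
    by (simp add: ennreal_mult)
  then show ?thesis
    unfolding beta_measure_def r_def[symmetric]
    by (subst density_density_eq) (auto simp: r_def)
qed

lemma cdf_beta_measure_le_of_le:
  assumes a: "a > 0" and b: "0 < b" "b \<le> b'"
  shows "cdf (beta_measure a b) x \<le> cdf (beta_measure a b') x"
proof -
  have B: "Beta a b > 0" "Beta a b' > 0" using Beta_real_pos a b by auto
  note eq = beta_measure_eq_density_beta_measure[OF assms]
  have "real_distribution (beta_measure a b')"
    using real_distribution_beta_measure a b by simp
  then show ?thesis
    unfolding eq
  proof (rule cdf_le_cdf_density_antimono[OF real_distribution_beta_measure[OF a b(1)]])
    show "antimono (\<lambda>t. Beta a b / Beta a b' * (1 - min t 1) powr (b' - b))"
      using B b by (intro antimonoI mult_left_mono powr_mono2) auto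
  qed (use B in auto)
qed

lemma incbeta_eq_cdf: "incbeta a b = cdf (beta_measure a b)"
  by (simp add: incbeta_def cdf_def fun_eq_iff)

section \<open>The quantile transform\<close>

lemma cdf_of_eq_cdf: "cdf_of = cdf"
  by (simp add: cdf_of_def cdf_def fun_eq_iff)

lemma quantile_of_mem:
  assumes cont: "\<And>y. isCont (cdf \<nu>) y" and "cdf \<nu> 1 = 1" "p \<le> 1"
  shows "quantile_of \<nu> p \<in> {x \<in> {0..1}. p \<le> cdf \<nu> x}"
proof -
  let ?S = "{x \<in> {0..1}. p \<le> cdf \<nu> x}"
  have "?S = {0..1} \<inter> {x. p \<le> cdf \<nu> x}" by auto
  also have "closed \<dots>"
    using cont by (intro closed_Int closed_atLeastAtMost closed_Collect_le continuous_intros)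
      (auto intro: continuous_at_imp_continuous_on)
  finally have "closed ?S" .
  moreover have "?S \<noteq> {}" using assms by force
  moreover have "bdd_below ?S" by (rule bdd_belowI[of _ 0]) simp
  ultimately have "Inf ?S \<in> ?S" by (intro closed_contains_Inf)
  then show ?thesis unfolding quantile_of_def cdf_of_eq_cdf .
qed

lemma quantile_of_le_iff:
  assumes "real_distribution \<nu>" "\<And>y. isCont (cdf \<nu>) y" "cdf \<nu> 1 = 1" "p \<le> 1" "y \<in> {0..1}"
  shows "quantile_of \<nu> p \<le> y \<longleftrightarrow> p \<le> cdf \<nu> y"
proof
  interpret real_distribution \<nu> by fact
  assume "quantile_of \<nu> p \<le> y"
  then have "cdf \<nu> (quantile_of \<nu> p) \<le> cdf \<nu> y" by (rule cdf_nondecreasing)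
  with quantile_of_mem[OF assms(2-4)] show "p \<le> cdf \<nu> y" by simp
next
  assume "p \<le> cdf \<nu> y"
  with assms(5) have "y \<in> {x \<in> {0..1}. p \<le> cdf \<nu> x}" by simp
  then show "quantile_of \<nu> p \<le> y"
    unfolding quantile_of_def cdf_of_eq_cdf by (rule cInf_lower) (rule bdd_belowI[of _ 0], simp)
qed

lemma quantile_of_mono:
  assumes "cdf \<nu> 1 = 1" "p \<le> q" "q \<le> 1"
  shows "quantile_of \<nu> p \<le> quantile_of \<nu> q"
  unfolding quantile_of_def cdf_of_eq_cdf
  using assms by (intro cInf_superset_mono bdd_belowI[of _ 0]) auto

lemma measure_cdf_le:
  assumes "real_distribution \<mu>" and cont: "\<And>x. isCont (cdf \<mu>) x"
    and F0: "cdf \<mu> 0 = 0" and F1: "cdf \<mu> 1 = 1" and p: "p \<in> {0..1}"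
  shows "measure \<mu> {x. cdf \<mu> x \<le> p} = p"
proof (cases "p = 1")
  case True
  interpret real_distribution \<mu> by fact
  show ?thesis using True cdf_bounded_prob prob_space by simp
next
  case False
  interpret real_distribution \<mu> by fact
  let ?T = "{x. cdf \<mu> x \<le> p}"
  obtain z where z: "cdf \<mu> z = p"
    using IVT'[of "cdf \<mu>" 0 p 1] p F0 F1 cont by (auto intro: continuous_at_imp_continuous_on)
  then have z_in: "z \<in> ?T" by simp
  have bdd: "bdd_above ?T"
  proof (rule bdd_aboveI)
    show "x \<le> 1" if "x \<in> ?T" for x
      using that False p F1 cdf_nondecreasing[of 1 x] by (cases "x \<le> 1") auto
  qed
  have "closed ?T"
    using cont by (intro closed_Collect_le continuous_intros) (auto intro: continuous_at_imp_continuous_on)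
  then have Sup: "Sup ?T \<in> ?T" "z \<le> Sup ?T"
    using closed_contains_Sup[OF _ bdd] cSup_upper[OF z_in bdd] z_in by auto
  have "?T = {..Sup ?T}"
  proof
    show "?T \<subseteq> {..Sup ?T}" using bdd by (auto intro: cSup_upper)
    show "{..Sup ?T} \<subseteq> ?T"
    proof
      fix x assume "x \<in> {..Sup ?T}"
      then have "cdf \<mu> x \<le> cdf \<mu> (Sup ?T)" by (simp add: cdf_nondecreasing)
      with Sup(1) show "x \<in> ?T" by simp
    qed
  qed
  then have "measure \<mu> ?T = cdf \<mu> (Sup ?T)" by (simp add: cdf_def)
  also have "\<dots> = p"
    using Sup(1) cdf_nondecreasing[OF Sup(2)] z by simp
  finally show ?thesis .
qed

lemma borel_measurable_quantile_of_cdf: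
  assumes "real_distribution \<mu>" "cdf \<nu> 1 = 1"
  shows "(\<lambda>x. quantile_of \<nu> (cdf \<mu> x)) \<in> borel_measurable borel"
proof (rule borel_measurable_mono, rule monoI)
  interpret real_distribution \<mu> by fact
  show "quantile_of \<nu> (cdf \<mu> x) \<le> quantile_of \<nu> (cdf \<mu> y)" if "x \<le> y" for x y
    using that assms(2) by (intro quantile_of_mono cdf_nondecreasing cdf_bounded_prob)
qed

lemma measure_quantile_of_cdf_le:
  assumes \<mu>: "real_distribution \<mu>" "\<And>x. isCont (cdf \<mu>) x" "cdf \<mu> 0 = 0" "cdf \<mu> 1 = 1"
    and \<nu>: "real_distribution \<nu>" "\<And>x. isCont (cdf \<nu>) x" "cdf \<nu> 0 = 0" "cdf \<nu> 1 = 1"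
  shows "measure \<mu> {x. quantile_of \<nu> (cdf \<mu> x) \<le> y} = cdf \<nu> y"
proof -
  interpret \<mu>: real_distribution \<mu> by fact
  interpret \<nu>: real_distribution \<nu> by fact
  let ?U = "\<lambda>x. quantile_of \<nu> (cdf \<mu> x)"
  have U_unit: "0 \<le> ?U x" "?U x \<le> 1" for x
    using quantile_of_mem[OF \<nu>(2,4) \<mu>.cdf_bounded_prob] by simp_all
  consider "y < 0" | "1 \<le> y" | "0 \<le> y" "y < 1" by linarith
  then show ?thesis
  proof cases
    case 1
    then have "{x. ?U x \<le> y} = {}" using U_unit(1) by (simp add: not_le less_le_trans)
    moreover have "cdf \<nu> y = 0"
      using 1 \<nu>(3) \<nu>.cdf_nondecreasing[of y 0] \<nu>.cdf_nonneg[of y] by simp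
    ultimately show ?thesis by simp
  next
    case 2
    then have "{x. ?U x \<le> y} = UNIV" using U_unit(2) order_trans by blast
    moreover have "cdf \<nu> y = 1"
      using 2 \<nu>(4) \<nu>.cdf_nondecreasing[of 1 y] \<nu>.cdf_bounded_prob[of y] by simp
    ultimately show ?thesis using \<mu>.prob_space by simp
  next
    case 3
    then have "{x. ?U x \<le> y} = {x. cdf \<mu> x \<le> cdf \<nu> y}"
      using quantile_of_le_iff[OF \<nu>(1,2,4) \<mu>.cdf_bounded_prob] by simp
    then show ?thesis
      using measure_cdf_le[OF \<mu>] \<nu>.cdf_nonneg[of y] \<nu>.cdf_bounded_prob[of y] by simp
  qed
qed

lemma distr_quantile_of_cdf:
  assumes \<mu>: "real_distribution \<mu>" "\<And>x. isCont (cdf \<mu>) x" "cdf \<mu> 0 = 0" "cdf \<mu> 1 = 1"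
    and \<nu>: "real_distribution \<nu>" "\<And>x. isCont (cdf \<nu>) x" "cdf \<nu> 0 = 0" "cdf \<nu> 1 = 1"
  shows "distr \<mu> borel (\<lambda>x. quantile_of \<nu> (cdf \<mu> x)) = \<nu>"
proof (rule cdf_unique)
  interpret \<mu>: real_distribution \<mu> by fact
  have U_meas: "(\<lambda>x. quantile_of \<nu> (cdf \<mu> x)) \<in> borel_measurable borel"
    using borel_measurable_quantile_of_cdf \<mu>(1) \<nu>(4) .
  then show "real_distribution (distr \<mu> borel (\<lambda>x. quantile_of \<nu> (cdf \<mu> x)))" by simp
  show "cdf (distr \<mu> borel (\<lambda>x. quantile_of \<nu> (cdf \<mu> x))) = cdf \<nu>"
    using U_meas measure_quantile_of_cdf_le[OF assms]
    by (simp add: fun_eq_iff cdf_def measure_distr vimage_def)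
qed fact

section \<open>Lazy Markov chains\<close>

text \<open>The library has no sum of measures, so the mixture is stated set by set.\<close>

lemma measure_eq_mixture_if_eq_on_generator:
  assumes "prob_space P" "prob_space Q" "prob_space R"
    and sets: "sets Q = sets P" "sets R = sets P" "sets P = sigma_sets (space P) G"
    and G: "Int_stable G"
    and eq: "\<And>X. X \<in> G \<Longrightarrow> measure P X = \<rho> * measure Q X + (1 - \<rho>) * measure R X"
    and X: "X \<in> sets P"
  shows "measure P X = \<rho> * measure Q X + (1 - \<rho>) * measure R X"
proof -
  interpret P: prob_space P by fact
  interpret Q: prob_space Q by fact
  interpret R: prob_space R by fact
  have space: "space Q = space P" "space R = space P"
    using sets_eq_imp_space_eq[OF sets(1)] sets_eq_imp_space_eq[OF sets(2)] by simp_all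
  have "G \<subseteq> sets P"
    using sigma_sets_superset_generator[of G "space P"] sets(3) by simp
  then have "G \<subseteq> Pow (space P)"
    using sets.sets_into_space by blast
  from G this X[unfolded sets(3)] show ?thesis
  proof (induction rule: sigma_sets_induct_disjoint)
    case (basic X)
    then show ?case by (rule eq)
  next
    case empty
    then show ?case by simp
  next
    case (compl X)
    then have "X \<in> sets P" "X \<in> sets Q" "X \<in> sets R" using sets by auto
    then have compl_eqs: "measure P (space P - X) = 1 - measure P X"
      "measure Q (space P - X) = 1 - measure Q X" "measure R (space P - X) = 1 - measure R X"
      using P.prob_compl Q.prob_compl R.prob_compl space by simp_all
    show ?case unfolding compl_eqs compl.IH by (simp add: algebra_simps)
  next
    case (union A)
    then have "range A \<subseteq> sets P" "range A \<subseteq> sets Q" "range A \<subseteq> sets R" using sets by auto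
    then have "(\<lambda>i. measure P (A i)) sums measure P (\<Union>i. A i)"
      "(\<lambda>i. \<rho> * measure Q (A i) + (1 - \<rho>) * measure R (A i)) sums
         (\<rho> * measure Q (\<Union>i. A i) + (1 - \<rho>) * measure R (\<Union>i. A i))"
      using union.hyps(1) by (auto intro!: sums_add sums_mult P.finite_measure_UNION
          Q.finite_measure_UNION R.finite_measure_UNION)
    then show ?case using union.IH sums_unique2 by simp
  qed
qed

lemma measure_pair_measure_snd_le:
  fixes f :: "'a \<Rightarrow> real"
  assumes "prob_space \<mu>" "real_distribution \<nu>" and f: "f \<in> borel_measurable \<mu>"
  shows "measure (\<mu> \<Otimes>\<^sub>M \<nu>) {p \<in> space (\<mu> \<Otimes>\<^sub>M \<nu>). snd p \<le> f (fst p)} = (\<integral>x. cdf \<nu> (f x) \<partial>\<mu>)"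
proof -
  interpret \<mu>: prob_space \<mu> by fact
  interpret \<nu>: real_distribution \<nu> by fact
  let ?S = "{p \<in> space (\<mu> \<Otimes>\<^sub>M \<nu>). snd p \<le> f (fst p)}"
  have [measurable]: "cdf \<nu> \<in> borel_measurable borel"
    by (rule borel_measurable_mono) (simp add: mono_def \<nu>.cdf_nondecreasing)
  have "?S \<in> sets (\<mu> \<Otimes>\<^sub>M \<nu>)" using f by measurable
  then have "emeasure (\<mu> \<Otimes>\<^sub>M \<nu>) ?S = (\<integral>\<^sup>+x. emeasure \<nu> (Pair x -` ?S) \<partial>\<mu>)"
    by (rule \<nu>.emeasure_pair_measure_alt)
  also have "\<dots> = (\<integral>\<^sup>+x. ennreal (cdf \<nu> (f x)) \<partial>\<mu>)"
    by (intro nn_integral_cong)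
      (simp add: cdf_def \<nu>.emeasure_eq_measure space_pair_measure vimage_def atMost_def)
  also have "\<dots> = ennreal (\<integral>x. cdf \<nu> (f x) \<partial>\<mu>)"
    using f \<nu>.cdf_nonneg \<nu>.cdf_bounded_prob
    by (intro nn_integral_eq_integral \<mu>.integrable_const_bound[where B=1]) auto
  finally show ?thesis
    using \<nu>.cdf_nonneg by (simp add: measure_def integral_nonneg)
qed

lemma sb_weight_Suc_le_iff:
  assumes j: "1 \<le> j" and v: "\<forall>i\<in>{1..Suc j}. v i \<omega> \<in> {0<..<1}"
  shows "sb_weight v (Suc j) \<omega> \<le> sb_weight v j \<omega> \<longleftrightarrow> v (Suc j) \<omega> \<le> min 1 (v j \<omega> / (1 - v j \<omega>))"
proof -
  define P where "P = (\<Prod>i\<in>{1..<j}. 1 - v i \<omega>)"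
  have "P > 0" unfolding P_def using v by (intro prod_pos) auto
  have "v j \<omega> < 1" "v (Suc j) \<omega> < 1" using v j by auto
  have "sb_weight v (Suc j) \<omega> = v (Suc j) \<omega> * (1 - v j \<omega>) * P"
    unfolding sb_weight_def P_def using j by (simp add: prod.atLeastLessThan_Suc)
  moreover have "sb_weight v j \<omega> = v j \<omega> * P" unfolding sb_weight_def P_def ..
  ultimately show ?thesis
    using \<open>P > 0\<close> \<open>v j \<omega> < 1\<close> \<open>v (Suc j) \<omega> < 1\<close> by (simp add: pos_le_divide_eq)
qed

locale continuous_lazy_chain =
  fixes M :: "'a measure" and \<rho> :: real and \<pi> :: "nat \<Rightarrow> real measure"
    and v :: "nat \<Rightarrow> 'a \<Rightarrow> real"
  assumes chain: "lazy_markov_chain M \<rho> \<pi> v"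
    and real_distribution_\<pi>: "\<And>k. 1 \<le> k \<Longrightarrow> real_distribution (\<pi> k)"
    and isCont_cdf_\<pi>: "\<And>k x. 1 \<le> k \<Longrightarrow> isCont (cdf (\<pi> k)) x"
    and cdf_\<pi>_0: "\<And>k. 1 \<le> k \<Longrightarrow> cdf (\<pi> k) 0 = 0"
    and cdf_\<pi>_1: "\<And>k. 1 \<le> k \<Longrightarrow> cdf (\<pi> k) 1 = 1"
begin

sublocale prob_space M
  using chain by (simp add: lazy_markov_chain_def)

lemma borel_measurable_v: "1 \<le> k \<Longrightarrow> v k \<in> borel_measurable M"
  using chain by (simp add: lazy_markov_chain_def)

lemma borel_measurable_Upsilon: "1 \<le> k \<Longrightarrow> Upsilon \<pi> k \<in> borel_measurable borel"
  unfolding Upsilon_def cdf_of_eq_cdf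
  by (intro borel_measurable_quantile_of_cdf real_distribution_\<pi> cdf_\<pi>_1) auto

lemma distr_Upsilon: "1 \<le> k \<Longrightarrow> distr (\<pi> k) borel (Upsilon \<pi> k) = \<pi> (Suc k)"
  unfolding Upsilon_def cdf_of_eq_cdf
  by (intro distr_quantile_of_cdf real_distribution_\<pi> isCont_cdf_\<pi> cdf_\<pi>_0 cdf_\<pi>_1) auto

lemma measure_v_v_Suc_Times:
  assumes k: "1 \<le> k" and A: "A \<in> sets borel" and B: "B \<in> sets borel"
  shows "measure M {\<omega> \<in> space M. v k \<omega> \<in> A \<and> v (Suc k) \<omega> \<in> B} =
     \<rho> * measure M {\<omega> \<in> space M. v k \<omega> \<in> A \<inter> Upsilon \<pi> k -` B} +
     (1 - \<rho>) * measure (\<pi> (Suc k)) B * measure M {\<omega> \<in> space M. v k \<omega> \<in> A}"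
proof -
  note [measurable] = borel_measurable_v[OF k] borel_measurable_Upsilon[OF k]
  let ?past = "\<lambda>\<omega>. \<lambda>i\<in>{1..k}. v i \<omega>"
  define A' where "A' = (\<lambda>x. x k) -` A \<inter> space (PiM {1..k} (\<lambda>_. (borel :: real measure)))"
  have A': "A' \<in> sets (PiM {1..k} (\<lambda>_. borel))"
    unfolding A'_def using k A by (intro measurable_sets[OF measurable_component_singleton]) auto
  have past_in_A': "?past \<omega> \<in> A' \<longleftrightarrow> v k \<omega> \<in> A" for \<omega>
    using k by (auto simp: A'_def space_PiM)
  have "measure M {\<omega> \<in> space M. v k \<omega> \<in> A \<and> v (Suc k) \<omega> \<in> B} =
      (\<integral>\<omega>. indicator A' (?past \<omega>) * lazy_kernel \<rho> \<pi> k (v k \<omega>) B \<partial>M)"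
    using chain k A' B unfolding lazy_markov_chain_def past_in_A'[symmetric] by blast
  also have "\<dots> = (\<integral>\<omega>. \<rho> * indicator {\<omega> \<in> space M. v k \<omega> \<in> A \<inter> Upsilon \<pi> k -` B} \<omega> +
      (1 - \<rho>) * measure (\<pi> (Suc k)) B * indicator {\<omega> \<in> space M. v k \<omega> \<in> A} \<omega> \<partial>M)"
    unfolding lazy_kernel_def indicator_def past_in_A'
    by (intro Bochner_Integration.integral_cong) auto
  also have "\<dots> = \<rho> * measure M {\<omega> \<in> space M. v k \<omega> \<in> A \<inter> Upsilon \<pi> k -` B} +
      (1 - \<rho>) * measure (\<pi> (Suc k)) B * measure M {\<omega> \<in> space M. v k \<omega> \<in> A}"
    using A B by (simp add: measure_def[symmetric] emeasure_eq_measure)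
  finally show ?thesis .
qed

lemma distr_v: "1 \<le> k \<Longrightarrow> distr M borel (v k) = \<pi> k"
proof (induction k rule: dec_induct)
  case base
  then show ?case using chain by (simp add: lazy_markov_chain_def)
next
  case (step k)
  note [measurable] = borel_measurable_v[OF step.hyps(1)] borel_measurable_v[of "Suc k"]
    borel_measurable_Upsilon[OF step.hyps(1)]
  interpret \<pi>: real_distribution "\<pi> k" using real_distribution_\<pi> step.hyps(1) .
  have law_k: "measure M {\<omega> \<in> space M. v k \<omega> \<in> E} = measure (\<pi> k) E" if "E \<in> sets borel" for E
    using measure_distr[of "v k" M borel E] that by (simp add: step.IH vimage_def Int_def conj_commute)
  show ?case
  proof (rule cdf_unique)
    show "real_distribution (distr M borel (v (Suc k)))" by simp
    show "real_distribution (\<pi> (Suc k))" using real_distribution_\<pi> by simp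
    show "cdf (distr M borel (v (Suc k))) = cdf (\<pi> (Suc k))"
    proof
      fix y
      have "cdf (distr M borel (v (Suc k))) y = measure M {\<omega> \<in> space M. v k \<omega> \<in> UNIV \<and> v (Suc k) \<omega> \<in> {..y}}"
        by (simp add: cdf_def measure_distr vimage_def Int_def conj_commute)
      also have "\<dots> = \<rho> * measure (\<pi> k) (Upsilon \<pi> k -` {..y}) + (1 - \<rho>) * measure (\<pi> (Suc k)) {..y}"
        using measure_v_v_Suc_Times[OF step.hyps(1), of UNIV "{..y}"] law_k[of UNIV]
          law_k[of "Upsilon \<pi> k -` {..y}"] \<pi>.prob_space
          measurable_sets_borel[OF borel_measurable_Upsilon[OF step.hyps(1)]] by simp
      also have "measure (\<pi> k) (Upsilon \<pi> k -` {..y}) = measure (\<pi> (Suc k)) {..y}"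
        using measure_distr[of "Upsilon \<pi> k" "\<pi> k" borel "{..y}"] distr_Upsilon[OF step.hyps(1)] by simp
      finally show "cdf (distr M borel (v (Suc k))) y = cdf (\<pi> (Suc k)) y"
        by (simp add: cdf_def algebra_simps)
    qed
  qed
qed

lemma measure_v_in:
  assumes "1 \<le> k" "E \<in> sets borel"
  shows "measure M {\<omega> \<in> space M. v k \<omega> \<in> E} = measure (\<pi> k) E"
  using measure_distr[of "v k" M borel E] assms borel_measurable_v
  by (simp add: distr_v vimage_def Int_def conj_commute)

lemma measure_v_v_Suc:
  assumes j: "1 \<le> j" and C: "C \<in> sets (borel \<Otimes>\<^sub>M borel)"
  shows "measure M {\<omega> \<in> space M. (v j \<omega>, v (Suc j) \<omega>) \<in> C} =
    \<rho> * measure (\<pi> j) {x. (x, Upsilon \<pi> j x) \<in> C} + (1 - \<rho>) * measure (\<pi> j \<Otimes>\<^sub>M \<pi> (Suc j)) C"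
proof -
  note [measurable] = borel_measurable_v[OF j] borel_measurable_v[of "Suc j"]
    borel_measurable_Upsilon[OF j]
  interpret \<pi>: real_distribution "\<pi> j" using real_distribution_\<pi> j .
  interpret \<pi>': real_distribution "\<pi> (Suc j)" using real_distribution_\<pi> by simp
  interpret \<pi>\<pi>': pair_prob_space "\<pi> j" "\<pi> (Suc j)" ..
  let ?P = "distr M (borel \<Otimes>\<^sub>M borel) (\<lambda>\<omega>. (v j \<omega>, v (Suc j) \<omega>))"
  let ?Q = "distr (\<pi> j) (borel \<Otimes>\<^sub>M borel) (\<lambda>x. (x, Upsilon \<pi> j x))"
  let ?R = "\<pi> j \<Otimes>\<^sub>M \<pi> (Suc j)"
  have "measure ?P C = \<rho> * measure ?Q C + (1 - \<rho>) * measure ?R C"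
  proof (rule measure_eq_mixture_if_eq_on_generator)
    show "prob_space ?P" "prob_space ?Q" "prob_space ?R"
      by (auto intro!: prob_space_distr \<pi>.prob_space_distr simp: \<pi>\<pi>'.prob_space_axioms)
    show "sets ?Q = sets ?P" "sets ?R = sets ?P" by simp_all
    show "sets ?P = sigma_sets (space ?P) {A \<times> B |A B. A \<in> sets borel \<and> B \<in> sets borel}"
      by (simp add: sets_pair_measure space_pair_measure)
    show "Int_stable {A \<times> B |A B. A \<in> sets (borel :: real measure) \<and> B \<in> sets (borel :: real measure)}"
      by (rule Int_stable_pair_measure_generator)
    show "C \<in> sets ?P" using C by simp
  next
    fix X assume "X \<in> {A \<times> B |A B. A \<in> sets (borel :: real measure) \<and> B \<in> sets (borel :: real measure)}"
    then obtain A B where X: "X = A \<times> B" and AB: "A \<in> sets borel" "B \<in> sets borel" by auto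
    have AB': "A \<inter> Upsilon \<pi> j -` B \<in> sets borel"
      using AB measurable_sets_borel[OF borel_measurable_Upsilon[OF j]] by auto
    have "measure ?P X = measure M {\<omega> \<in> space M. v j \<omega> \<in> A \<and> v (Suc j) \<omega> \<in> B}"
      using AB by (simp add: X measure_distr vimage_def Int_def conj_commute)
    also have "\<dots> = \<rho> * measure (\<pi> j) (A \<inter> Upsilon \<pi> j -` B) + (1 - \<rho>) * (measure (\<pi> j) A * measure (\<pi> (Suc j)) B)"
      using measure_v_v_Suc_Times[OF j AB] measure_v_in[OF j AB(1)] measure_v_in[OF j AB']
      by (simp add: algebra_simps)
    also have "measure (\<pi> j) (A \<inter> Upsilon \<pi> j -` B) = measure ?Q X"
      using AB by (simp add: X measure_distr vimage_def Int_def)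
    also have "measure (\<pi> j) A * measure (\<pi> (Suc j)) B = measure ?R X"
      using AB by (simp add: X measure_def \<pi>'.emeasure_pair_measure_Times enn2real_mult)
    finally show "measure ?P X = \<rho> * measure ?Q X + (1 - \<rho>) * measure ?R X" .
  qed
  then show ?thesis
    using C by (simp add: measure_distr vimage_def Int_def conj_commute)
qed

lemma borel_measurable_sb_weight: "1 \<le> k \<Longrightarrow> sb_weight v k \<in> borel_measurable M"
  unfolding sb_weight_def[abs_def]
  by (intro borel_measurable_times borel_measurable_prod borel_measurable_diff borel_measurable_v) auto

lemma AE_v_in:
  assumes "1 \<le> k" "S \<in> sets borel" "measure (\<pi> k) S = 1"
  shows "AE \<omega> in M. v k \<omega> \<in> S"
proof -
  interpret \<pi>: real_distribution "\<pi> k" using real_distribution_\<pi> assms(1) .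
  have "AE x in distr M borel (v k). x \<in> S"
    unfolding distr_v[OF assms(1)] using assms(2,3) by (intro \<pi>.AE_prob_1) simp
  then show ?thesis
    using assms(1,2) borel_measurable_v by (simp add: AE_distr_iff)
qed

lemma Upsilon_le:
  assumes "1 \<le> k" "x \<in> {0..1}" "cdf (\<pi> k) x \<le> cdf (\<pi> (Suc k)) x"
  shows "Upsilon \<pi> k x \<le> x"
  unfolding Upsilon_def cdf_of_eq_cdf
  using assms real_distribution.cdf_bounded_prob[OF real_distribution_\<pi>]
  by (subst quantile_of_le_iff[OF real_distribution_\<pi> isCont_cdf_\<pi> cdf_\<pi>_1]) auto

lemma measure_Upsilon_le:
  assumes k: "1 \<le> k" and unit: "measure (\<pi> k) {0<..<1} = 1"
    and stoch_le: "\<And>x. cdf (\<pi> k) x \<le> cdf (\<pi> (Suc k)) x"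
    and g: "g \<in> borel_measurable borel" "\<And>x. x \<in> {0<..<1} \<Longrightarrow> x \<le> g x"
  shows "measure (\<pi> k) {x. Upsilon \<pi> k x \<le> g x} = 1"
proof -
  interpret \<pi>: real_distribution "\<pi> k" using real_distribution_\<pi> k .
  have "Upsilon \<pi> k x \<le> g x" if "x \<in> {0<..<1}" for x
    using Upsilon_le[OF k _ stoch_le, of x] g(2)[OF that] that by simp
  then have "{0<..<1} \<subseteq> {x. Upsilon \<pi> k x \<le> g x}" by auto
  moreover have "{x. Upsilon \<pi> k x \<le> g x} \<in> sets (\<pi> k)"
    using borel_measurable_Upsilon[OF k] g(1) by simp
  ultimately show ?thesis
    using \<pi>.finite_measure_mono unit \<pi>.prob_le_1 by (metis antisym)
qed

lemma measure_sb_weight_Suc_le: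
  assumes j: "1 \<le> j" and unit: "\<And>k. 1 \<le> k \<Longrightarrow> measure (\<pi> k) {0<..<1} = 1"
    and stoch_le: "\<And>x. cdf (\<pi> j) x \<le> cdf (\<pi> (Suc j)) x"
  shows "measure M {\<omega> \<in> space M. sb_weight v (Suc j) \<omega> \<le> sb_weight v j \<omega>} =
    \<rho> + (1 - \<rho>) * (\<integral>x. cdf (\<pi> (Suc j)) (min 1 (x / (1 - x))) \<partial>\<pi> j)"
proof -
  note [measurable] = borel_measurable_v[OF j] borel_measurable_v[of "Suc j"]
    borel_measurable_Upsilon[OF j]
  interpret \<pi>: real_distribution "\<pi> j" using real_distribution_\<pi> j .
  let ?c = "\<lambda>x::real. min 1 (x / (1 - x))"
  define C where "C = {p \<in> space (borel \<Otimes>\<^sub>M borel). snd p \<le> ?c (fst p)}"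
  have C: "C \<in> sets (borel \<Otimes>\<^sub>M borel)" unfolding C_def by measurable
  have "AE \<omega> in M. \<forall>i\<in>{1..Suc j}. v i \<omega> \<in> {0<..<1}"
    using unit by (intro eventually_ball_finite ballI AE_v_in) auto
  then have "AE \<omega> in M. sb_weight v (Suc j) \<omega> \<le> sb_weight v j \<omega> \<longleftrightarrow> (v j \<omega>, v (Suc j) \<omega>) \<in> C"
    by eventually_elim (simp add: sb_weight_Suc_le_iff[OF j] C_def space_pair_measure)
  then have "measure M {\<omega> \<in> space M. sb_weight v (Suc j) \<omega> \<le> sb_weight v j \<omega>} =
      measure M {\<omega> \<in> space M. (v j \<omega>, v (Suc j) \<omega>) \<in> C}"
    using borel_measurable_sb_weight[OF j] borel_measurable_sb_weight[of "Suc j"] C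
    by (intro measure_eq_AE) auto
  also have "\<dots> = \<rho> * measure (\<pi> j) {x. (x, Upsilon \<pi> j x) \<in> C} + (1 - \<rho>) * measure (\<pi> j \<Otimes>\<^sub>M \<pi> (Suc j)) C"
    by (rule measure_v_v_Suc[OF j C])
  also have "measure (\<pi> j) {x. (x, Upsilon \<pi> j x) \<in> C} = 1"
  proof -
    have "{x. (x, Upsilon \<pi> j x) \<in> C} = {x. Upsilon \<pi> j x \<le> ?c x}"
      by (simp add: C_def space_pair_measure)
    moreover have "x \<le> ?c x" if "x \<in> {0<..<1}" for x
      using that by (simp add: le_divide_eq mult_le_cancel_left1)
    ultimately show ?thesis
      using measure_Upsilon_le[OF j unit[OF j] stoch_le, of ?c] by simp
  qed
  also have "measure (\<pi> j \<Otimes>\<^sub>M \<pi> (Suc j)) C = (\<integral>x. cdf (\<pi> (Suc j)) (?c x) \<partial>\<pi> j)"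
    using measure_pair_measure_snd_le[OF \<pi>.prob_space_axioms real_distribution_\<pi>, of "Suc j" ?c]
      real_distribution.space_eq_univ[OF real_distribution_\<pi>, of "Suc j"]
    by (simp add: C_def space_pair_measure)
  finally show ?thesis by simp
qed

end

theorem mainTheorem19:
  fixes M :: "'a measure" and v :: "nat \<Rightarrow> 'a \<Rightarrow> real"
    and \<rho> \<sigma> \<theta> :: real and j :: nat
  assumes "0 \<le> \<rho>" "\<rho> \<le> 1"
    and "0 \<le> \<sigma>" "\<sigma> < 1" "\<theta> > - \<sigma>"
    and "lazy_markov_chain M \<rho> (\<lambda>k. beta_measure (1 - \<sigma>) (\<theta> + real k * \<sigma>)) v"
    and "j \<ge> 1"
  shows "measure M {\<omega> \<in> space M. sb_weight v (Suc j) \<omega> \<le> sb_weight v j \<omega>} =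
           \<rho> + (1 - \<rho>) *
             (\<integral>x. incbeta (1 - \<sigma>) (\<theta> + real (Suc j) * \<sigma>) (min 1 (x / (1 - x)))
                \<partial>beta_measure (1 - \<sigma>) (\<theta> + real j * \<sigma>))"
proof -
  have a: "0 < 1 - \<sigma>" using assms(4) by simp
  have b: "0 < \<theta> + real k * \<sigma>" if "1 \<le> k" for k
  proof -
    have "\<sigma> \<le> real k * \<sigma>" using mult_right_mono[of 1 "real k" \<sigma>] that assms(3) by simp
    then show ?thesis using assms(5) by linarith
  qed
  interpret continuous_lazy_chain M \<rho> "\<lambda>k. beta_measure (1 - \<sigma>) (\<theta> + real k * \<sigma>)" v
  proof (rule continuous_lazy_chain.intro)
    fix k :: nat and x :: real assume k: "1 \<le> k"
    show "real_distribution (beta_measure (1 - \<sigma>) (\<theta> + real k * \<sigma>))"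
      using real_distribution_beta_measure a b k .
    show "isCont (cdf (beta_measure (1 - \<sigma>) (\<theta> + real k * \<sigma>))) x"
      using isCont_cdf_beta_measure a b k .
    show "cdf (beta_measure (1 - \<sigma>) (\<theta> + real k * \<sigma>)) 0 = 0"
      using cdf_beta_measure_0 a b k .
    show "cdf (beta_measure (1 - \<sigma>) (\<theta> + real k * \<sigma>)) 1 = 1"
      using cdf_beta_measure_1 a b k .
  qed (fact assms(6))
  have "cdf (beta_measure (1 - \<sigma>) (\<theta> + real j * \<sigma>)) x \<le>
      cdf (beta_measure (1 - \<sigma>) (\<theta> + real (Suc j) * \<sigma>)) x" for x
    using assms(3) by (intro cdf_beta_measure_le_of_le a b assms(7)) (simp add: algebra_simps)
  from measure_sb_weight_Suc_le[OF assms(7) measure_beta_measure_unit[OF a b] this]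
  show ?thesis unfolding incbeta_eq_cdf .
qed

end
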